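(* As formal power series in $y$ with coefficients in $\mathbb{Q}(x)$, $$\sum_{n=0}^{\infty}H_n(x)y^n=\frac{1-xy(1+y-y^2)}{(1-y)(1-xy)(1-xy-2xy^2)}.$$ In particular, for every $n\geq 0$, $$H_n(x)=\frac{1}{1-3x}+\frac{1}{2}x^n+h_n(x),\qquad h_n(x)=\frac{(\sqrt{2x}\,\mathrm{i})^{n}}{2(1-3x)}\left(8T_n\!\left(-\frac{\sqrt{2x}\,\mathrm{i}}{4}\right)-3(x+3)U_n\!\left(-\frac{\sqrt{2x}\,\mathrm{i}}{4}\right)\right),$$ where $\mathrm{i}^2=-1$ and $T_n$, $U_n$ are the Chebyshev polynomials of the first and second kind (the expressions $(\sqrt{2x}\,\mathrm{i})^nT_n(-\sqrt{2x}\,\mathrm{i}/4)$ and $(\sqrt{2x}\,\mathrm{i})^nU_n(-\sqrt{2x}\,\mathrm{i}/4)$ are polynomials in $x$, so this is an identity of rational functions in $x$).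
   Context: The Stern polynomials $B_n(t)\in\mathbb{Z}[t]$ are defined by $B_0(t)=0$, $B_1(t)=1$, and for $n\geq 1$: $B_{2n}(t)=tB_n(t)$, $B_{2n+1}(t)=B_n(t)+B_{n+1}(t)$. For $n\geq1$ let $e(n)=\deg B_n(t)$, and for $n\ge 0$ let $H_n(x)=\sum_{m=1}^{2^n}x^{e(m)}$. Chebyshev polynomials: $T_n(\cos\theta)=\cos(n\theta)$, $U_n(\cos\theta)=\sin((n+1)\theta)/\sin\theta$; equivalently $\sum_n T_n(a)z^n=(1-az)/(1-2az+z^2)$ and $\sum_n U_n(a)z^n=1/(1-2az+z^2)$. *)

theory Defs
  imports Complex_Main "HOL-Computational_Algebra.Computational_Algebra"
begin

function stern :: "nat \<Rightarrow> int poly" where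
  "stern n = (if n = 0 then 0 else if n = 1 then 1
              else if even n then [:0, 1:] * stern (n div 2)
              else stern (n div 2) + stern (n div 2 + 1))"
  by auto
termination by (relation "measure id") (auto elim!: oddE)

declare stern.simps [simp del]

definition e :: "nat \<Rightarrow> nat" where
  "e n = degree (stern n)"

definition H :: "nat \<Rightarrow> int poly" where
  "H n = (\<Sum>m = 1..2 ^ n. monom 1 (e m))"

fun chebT :: "nat \<Rightarrow> 'a::comm_ring_1 \<Rightarrow> 'a" where
  "chebT 0 a = 1"
| "chebT (Suc 0) a = a"
| "chebT (Suc (Suc n)) a = 2 * a * chebT (Suc n) a - chebT n a"

fun chebU :: "nat \<Rightarrow> 'a::comm_ring_1 \<Rightarrow> 'a" where
  "chebU 0 a = 1"
| "chebU (Suc 0) a = 2 * a"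
| "chebU (Suc (Suc n)) a = 2 * a * chebU (Suc n) a - chebU n a"

definition xQ :: "rat poly fract" where
  "xQ = to_fract [:0, 1:]"

end

theory Submission
  imports Defs
begin

(* The degrees of consecutive Stern polynomials differ by at most one,
   so each index j < 2^n is of one of three kinds: e(j+1) = e(j)+1 ("up"), e(j+1) = e(j)
   ("flat") or e(j+1) = e(j)-1 ("down").  Splitting H_n into the three corresponding
   partial sums and pairing the indices 2j, 2j+1 of level n+1 gives a 3x3 linear
   recursion for the partial sums; eliminating them shows that H_n satisfies a linear
   recurrence of order four whose characteristic polynomial is
   (1-y)(1-xy)(1-xy-2xy^2), with initial values (1+x)^k for k < 4.
   Both parts of the theorem follow from this recurrence alone:
   - multiplying the generating series by the characteristic polynomial leaves only the
     numerator 1 - xy(1+y-y^2), which gives the rational generating function over Q(x);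
   - the four sequences 1, x^n, s^n T_n(-s/4), s^n U_n(-s/4) (with s^2 = -2x) satisfy the
     recurrence, so the claimed closed form is one of its solutions, and it agrees with
     H_n on the first four values. *)

lemma stern_0: "stern 0 = 0" and stern_1: "stern (Suc 0) = 1"
  by (simp_all add: stern.simps)

(* Stern polynomials have nonnegative coefficients and, for n >= 1, a positive value at 1;
   in particular B_n is nonzero, so that the degree recursions below are exact. *)
lemma stern_poly_1_pos: "n \<ge> 1 \<Longrightarrow> poly (stern n) 1 > 0"
proof (induction n rule: stern.induct)
  case (1 n)
  show ?case
  proof (cases "n = 1")
    case True
    then show ?thesis by (simp add: stern_1)
  next
    case False
    with "1.prems" have n2: "n \<ge> 2" by auto
    then have half: "n div 2 \<ge> 1" by auto
    show ?thesis
    proof (cases "even n")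
      case True
      then show ?thesis using "1.IH"(1) n2 half by (subst stern.simps) simp
    next
      case False
      then show ?thesis using "1.IH"(2,3) n2 half by (subst stern.simps) (simp add: add_pos_pos)
    qed
  qed
qed

lemma stern_coeff_nonneg: "coeff (stern n) i \<ge> 0"
proof (induction n arbitrary: i rule: stern.induct)
  case (1 n)
  show ?case
  proof (cases "n \<le> 1")
    case True
    then have "n = 0 \<or> n = 1" by auto
    then show ?thesis by (auto simp: stern_0 stern_1)
  next
    case False
    then show ?thesis using "1.IH"
      by (subst stern.simps) (auto simp: coeff_pCons split: nat.split)
  qed
qed

(* Adding polynomials with nonnegative coefficients cannot cancel leading terms. *)
lemma degree_add_nonneg_coeffs:
  fixes p q :: "'a::linordered_idom poly"
  assumes p: "\<And>i. coeff p i \<ge> 0" and q: "\<And>i. coeff q i \<ge> 0"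
  shows "degree (p + q) = max (degree p) (degree q)"
proof (rule antisym)
  show "degree (p + q) \<le> max (degree p) (degree q)" by (rule degree_add_le_max)
next
  have lead_pos: "lead_coeff r > 0" if "r \<noteq> 0" "\<And>i. coeff r i \<ge> 0" for r :: "'a poly"
    using that(1) that(2)[of "degree r"] by (simp add: order_le_less)
  show "max (degree p) (degree q) \<le> degree (p + q)"
  proof (cases "p = 0 \<or> q = 0")
    case True
    then show ?thesis by auto
  next
    case False
    then have "coeff (p + q) (max (degree p) (degree q)) > 0"
      using lead_pos[of p] lead_pos[of q] p q
      by (cases "degree p \<le> degree q") (simp_all add: max_def add_pos_nonneg add_nonneg_pos)
    then show ?thesis by (intro le_degree) simp
  qed
qed

lemma e_0: "e 0 = 0" and e_1: "e 1 = 0"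
  by (simp_all add: e_def stern_0 stern_1)

lemma e_double: "j \<ge> 1 \<Longrightarrow> e (2 * j) = Suc (e j)"
  using stern_poly_1_pos[of j] unfolding e_def
  by (subst stern.simps) (auto simp: degree_pCons_eq)

lemma e_double_Suc: "e (Suc (Suc (2 * j))) = Suc (e (Suc j))"
  using e_double[of "Suc j"] by simp

lemma e_2: "e (Suc (Suc 0)) = Suc 0"
  using e_double_Suc[of 0] e_1 by simp

lemma e_odd: "e (Suc (2 * j)) = max (e j) (e (Suc j))"
proof (cases "j = 0")
  case True
  then show ?thesis by (simp add: e_0 e_1)
next
  case False
  then have "stern (Suc (2 * j)) = stern j + stern (Suc j)" by (subst stern.simps) simp
  then show ?thesis unfolding e_def by (simp add: degree_add_nonneg_coeffs stern_coeff_nonneg)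
qed

lemma e_Suc_bounds: "e (Suc k) \<le> Suc (e k) \<and> e k \<le> Suc (e (Suc k))"
proof (induction k rule: less_induct)
  case (less k)
  show ?case
  proof (cases "k = 0")
    case True
    then show ?thesis using e_0 e_1 e_double[of 1] by simp
  next
    case False
    show ?thesis
    proof (cases "even k")
      case True
      then obtain j where k: "k = 2 * j" by auto
      with False have "j \<ge> 1" "j < k" by auto
      then show ?thesis using e_double e_odd[of j] less[of j] k by simp
    next
      case False
      then obtain j where k: "k = Suc (2 * j)" using oddE by fastforce
      then have "j < k" by auto
      then show ?thesis using e_double_Suc[of j] e_odd[of j] less[of j] k by simp
    qed
  qed
qed

lemma e_step_cases: "e (Suc j) = Suc (e j) \<or> e (Suc j) = e j \<or> e j = Suc (e (Suc j))"
  using e_Suc_bounds[of j] by linarith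

definition Hval :: "'a::comm_ring_1 \<Rightarrow> nat \<Rightarrow> 'a" where
  "Hval x n = (\<Sum>m = 1..2 ^ n. x ^ e m)"

(* The contribution x^{e(j+1)} of index j+1, sorted by the kind of the step from j to j+1,
   each recorded by the smaller of the two exponents. *)
definition up_term :: "'a::comm_ring_1 \<Rightarrow> nat \<Rightarrow> 'a" where
  "up_term x j = (if e (Suc j) = Suc (e j) then x ^ e j else 0)"

definition flat_term :: "'a::comm_ring_1 \<Rightarrow> nat \<Rightarrow> 'a" where
  "flat_term x j = (if e (Suc j) = e j then x ^ e j else 0)"

definition down_term :: "'a::comm_ring_1 \<Rightarrow> nat \<Rightarrow> 'a" where
  "down_term x j = (if e j = Suc (e (Suc j)) then x ^ e (Suc j) else 0)"

definition Up :: "'a::comm_ring_1 \<Rightarrow> nat \<Rightarrow> 'a" where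
  "Up x n = (\<Sum>j<2 ^ n. up_term x j)"

definition Flat :: "'a::comm_ring_1 \<Rightarrow> nat \<Rightarrow> 'a" where
  "Flat x n = (\<Sum>j<2 ^ n. flat_term x j)"

definition Down :: "'a::comm_ring_1 \<Rightarrow> nat \<Rightarrow> 'a" where
  "Down x n = (\<Sum>j<2 ^ n. down_term x j)"

lemma power_e_Suc_split: "x ^ e (Suc j) = x * up_term x j + flat_term x j + down_term x j"
  using e_step_cases[of j] by (auto simp: up_term_def flat_term_def down_term_def)

lemma Hval_split: "Hval x n = x * Up x n + Flat x n + Down x n"
proof -
  have "Hval x n = (\<Sum>j<2 ^ n. x ^ e (Suc j))"
    unfolding Hval_def by (rule sum.reindex_bij_witness[where i = Suc and j = "\<lambda>m. m - 1"]) auto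
  then show ?thesis
    by (simp add: power_e_Suc_split Up_def Flat_def Down_def sum.distrib sum_distrib_left)
qed

(* How the kinds of the steps 2j -> 2j+1 -> 2j+2 are determined by the step j -> j+1;
   the exceptional index j = 0 comes from e(0) = e(1) = 0. *)
lemma up_term_pair: "up_term x (2 * j) + up_term x (Suc (2 * j)) = x * up_term x j + flat_term x j"
proof (cases "j = 0")
  case True
  then show ?thesis using e_0 e_1 e_2 by (simp add: up_term_def flat_term_def)
next
  case False
  then have "e (2 * j) = Suc (e j)" by (simp add: e_double)
  with e_step_cases[of j] show ?thesis
    by (elim disjE) (simp_all add: up_term_def flat_term_def e_odd e_double_Suc)
qed

lemma flat_term_pair:
  "flat_term x (2 * j) + flat_term x (Suc (2 * j)) =
     x * up_term x j + x * down_term x j + (if j = 0 then 1 else 0)"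
proof (cases "j = 0")
  case True
  then show ?thesis using e_0 e_1 e_2
    by (simp add: up_term_def flat_term_def down_term_def)
next
  case False
  then have "e (2 * j) = Suc (e j)" by (simp add: e_double)
  with e_step_cases[of j] False show ?thesis
    by (elim disjE) (simp_all add: up_term_def flat_term_def down_term_def e_odd e_double_Suc)
qed

lemma down_term_pair:
  "down_term x (2 * j) + down_term x (Suc (2 * j)) =
     flat_term x j + x * down_term x j - (if j = 0 then 1 else 0)"
proof (cases "j = 0")
  case True
  then show ?thesis using e_0 e_1 e_2 by (simp add: flat_term_def down_term_def)
next
  case False
  then have "e (2 * j) = Suc (e j)" by (simp add: e_double)
  with e_step_cases[of j] False show ?thesis
    by (elim disjE) (simp_all add: flat_term_def down_term_def e_odd e_double_Suc)
qed

lemma sum_lessThan_double: "(\<Sum>k<2 * m. f k) = (\<Sum>j<m. f (2 * j) + f (Suc (2 * j)))"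
  by (induction m) (simp_all add: algebra_simps)

lemma sum_indicator_0: "(\<Sum>j<(2::nat) ^ n. if j = 0 then (1::'a::comm_ring_1) else 0) = 1"
  by simp

lemma Up_Suc: "Up x (Suc n) = x * Up x n + Flat x n"
  unfolding Up_def Flat_def
  by (simp only: power_Suc sum_lessThan_double up_term_pair sum.distrib sum_distrib_left)

lemma Flat_Suc: "Flat x (Suc n) = x * Up x n + x * Down x n + 1"
  unfolding Up_def Flat_def Down_def
  by (simp only: power_Suc sum_lessThan_double flat_term_pair sum.distrib sum_distrib_left
      sum_indicator_0)

lemma Down_Suc: "Down x (Suc n) = Flat x n + x * Down x n - 1"
  unfolding Flat_def Down_def
  by (simp only: power_Suc sum_lessThan_double down_term_pair sum.distrib sum_distrib_left
      sum_subtractf sum_indicator_0)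

lemma Up_Flat_Down_0: "Up x 0 = 0" "Flat x 0 = 1" "Down x 0 = 0"
  using e_0 e_1 by (simp_all add: Up_def Flat_def Down_def up_term_def flat_term_def down_term_def)

(* The order-four recurrence with characteristic polynomial
   (1-y)(1-xy)(1-xy-2xy^2) = 1 - (1+2x)y + x^2y^2 + (2x+x^2)y^3 - 2x^2y^4. *)
definition H_recurrence :: "'a::comm_ring_1 \<Rightarrow> (nat \<Rightarrow> 'a) \<Rightarrow> bool" where
  "H_recurrence x a \<longleftrightarrow> (\<forall>n. a (n + 4) =
     (1 + 2 * x) * a (n + 3) - x ^ 2 * a (n + 2) - (2 * x + x ^ 2) * a (n + 1) + 2 * x ^ 2 * a n)"

(* Eliminating the three partial sums from their linear recursion. *)
lemma Hval_recurrence: "H_recurrence x (Hval x)"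
  unfolding H_recurrence_def Hval_split
  by (simp add: Up_Suc Flat_Suc Down_Suc algebra_simps power2_eq_square eval_nat_numeral)

lemma Hval_initial: "Hval x 0 = 1" "Hval x 1 = 1 + x" "Hval x 2 = (1 + x) ^ 2" "Hval x 3 = (1 + x) ^ 3"
  unfolding Hval_split
  by (simp_all add: Up_Suc Flat_Suc Down_Suc Up_Flat_Down_0 eval_nat_numeral algebra_simps)

lemma fps_times_monomial_nth:
  fixes F :: "'a::comm_ring_1 fps"
  shows "(F * (fps_const k * fps_X ^ j)) $ n = k * (if j \<le> n then F $ (n - j) else 0)"
proof -
  have "(F * (fps_const k * fps_X ^ j)) $ n = (fps_const k * (F * fps_X ^ j)) $ n"
    by (simp only: ac_simps)
  then show ?thesis
    unfolding fps_mult_left_const_nth fps_X_power_mult_right_nth by (simp add: not_less)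
qed

(* Any solution of the recurrence with the initial values of H_n has the rational
   generating function of the theorem: its product with the characteristic polynomial
   is the numerator. *)
lemma H_recurrence_fps:
  fixes c :: "'a::field"
  assumes rec: "H_recurrence c a"
    and init: "a 0 = 1" "a 1 = 1 + c" "a 2 = (1 + c) ^ 2" "a 3 = (1 + c) ^ 3"
  shows "Abs_fps a = (1 - fps_const c * fps_X * (1 + fps_X - fps_X ^ 2)) /
           ((1 - fps_X) * (1 - fps_const c * fps_X) *
            (1 - fps_const c * fps_X - 2 * fps_const c * fps_X ^ 2))"
proof -
  define N :: "'a fps" where "N = 1 - fps_const c * fps_X * (1 + fps_X - fps_X ^ 2)"
  define D :: "'a fps" where "D = (1 - fps_X) * (1 - fps_const c * fps_X) *
      (1 - fps_const c * fps_X - 2 * fps_const c * fps_X ^ 2)"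
  have D_expanded: "D = 1 - fps_const (1 + 2 * c) * fps_X ^ 1 + fps_const (c ^ 2) * fps_X ^ 2
      + fps_const (2 * c + c ^ 2) * fps_X ^ 3 - fps_const (2 * c ^ 2) * fps_X ^ 4"
    unfolding D_def
    by (simp add: fps_const_add [symmetric] fps_const_mult [symmetric] fps_const_power [symmetric]
        numeral_fps_const algebra_simps eval_nat_numeral
        del: fps_const_add fps_const_mult fps_const_power)
  have N_expanded: "N = 1 - fps_const c * fps_X - fps_const c * fps_X ^ 2 + fps_const c * fps_X ^ 3"
    unfolding N_def by (simp add: algebra_simps eval_nat_numeral)
  have "Abs_fps a * D = N"
  proof (rule fps_ext)
    fix n
    have lhs: "(Abs_fps a * D) $ n = a n - (1 + 2 * c) * (if 1 \<le> n then a (n - 1) else 0)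
        + c ^ 2 * (if 2 \<le> n then a (n - 2) else 0)
        + (2 * c + c ^ 2) * (if 3 \<le> n then a (n - 3) else 0)
        - 2 * c ^ 2 * (if 4 \<le> n then a (n - 4) else 0)"
      unfolding D_expanded distrib_left right_diff_distrib fps_add_nth fps_sub_nth
        fps_times_monomial_nth mult_1_right
      by simp
    have rhs: "N $ n = (if n = 0 then 1 else 0) - (if n = 1 then c else 0)
        - (if n = 2 then c else 0) + (if n = 3 then c else 0)"
      unfolding N_expanded by simp
    show "(Abs_fps a * D) $ n = N $ n"
    proof (cases "n < 4")
      case True
      then have "n = 0 \<or> n = 1 \<or> n = 2 \<or> n = 3" by auto
      then show ?thesis unfolding lhs rhs using init
        by (elim disjE) (simp_all add: algebra_simps power2_eq_square power3_eq_cube)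
    next
      case False
      then obtain m where "n = m + 4" by (metis add.commute le_Suc_ex not_less)
      then show ?thesis unfolding lhs rhs using rec unfolding H_recurrence_def
        by (simp add: algebra_simps)
    qed
  qed
  moreover have "D $ 0 = 1" unfolding D_expanded by simp
  ultimately have "N / D = Abs_fps a"
    by (metis fps_divide_unit inverse_mult_eq_1' mult.assoc mult.right_neutral one_neq_zero)
  then show ?thesis unfolding N_def D_def by simp
qed

lemma H_recurrence_add:
  assumes "H_recurrence x a" "H_recurrence x b"
  shows "H_recurrence x (\<lambda>n. a n + b n)"
  unfolding H_recurrence_def
proof
  fix n
  from assms have a: "a (n + 4) = (1 + 2 * x) * a (n + 3) - x ^ 2 * a (n + 2)
        - (2 * x + x ^ 2) * a (n + 1) + 2 * x ^ 2 * a n"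
    and b: "b (n + 4) = (1 + 2 * x) * b (n + 3) - x ^ 2 * b (n + 2)
        - (2 * x + x ^ 2) * b (n + 1) + 2 * x ^ 2 * b n"
    unfolding H_recurrence_def by blast+
  show "a (n + 4) + b (n + 4) = (1 + 2 * x) * (a (n + 3) + b (n + 3))
      - x ^ 2 * (a (n + 2) + b (n + 2)) - (2 * x + x ^ 2) * (a (n + 1) + b (n + 1))
      + 2 * x ^ 2 * (a n + b n)"
    unfolding a b by (simp add: algebra_simps)
qed

lemma H_recurrence_scale:
  assumes "H_recurrence x a"
  shows "H_recurrence x (\<lambda>n. p * a n)"
  unfolding H_recurrence_def
proof
  fix n
  from assms have a: "a (n + 4) = (1 + 2 * x) * a (n + 3) - x ^ 2 * a (n + 2)
        - (2 * x + x ^ 2) * a (n + 1) + 2 * x ^ 2 * a n"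
    unfolding H_recurrence_def by blast
  show "p * a (n + 4) = (1 + 2 * x) * (p * a (n + 3)) - x ^ 2 * (p * a (n + 2))
      - (2 * x + x ^ 2) * (p * a (n + 1)) + 2 * x ^ 2 * (p * a n)"
    unfolding a by (simp add: algebra_simps)
qed

lemma H_recurrence_const: "H_recurrence x (\<lambda>n. c)"
  unfolding H_recurrence_def by (simp add: algebra_simps power2_eq_square)

lemma H_recurrence_power: "H_recurrence x (\<lambda>n. x ^ n)"
  unfolding H_recurrence_def by (simp add: algebra_simps power2_eq_square power_add eval_nat_numeral)

(* Solutions of w(n+2) = x w(n+1) + 2x w(n), the factor 1 - xy - 2xy^2. *)
lemma H_recurrence_second_order:
  assumes w: "\<And>n. w (Suc (Suc n)) = x * w (Suc n) + 2 * x * w n"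
  shows "H_recurrence x w"
  unfolding H_recurrence_def
proof
  fix n
  have "w (n + 4) = x * (x * w (n + 2) + 2 * x * w (n + 1)) + 2 * x * w (n + 2)"
    using w[of "n + 2"] w[of "n + 1"] by (simp add: eval_nat_numeral)
  moreover have "w (n + 3) = x * w (n + 2) + 2 * x * w (n + 1)"
    using w[of "n + 1"] by (simp add: eval_nat_numeral)
  moreover have "w (n + 2) = x * w (n + 1) + 2 * x * w n"
    using w[of n] by (simp add: eval_nat_numeral)
  ultimately show "w (n + 4) = (1 + 2 * x) * w (n + 3) - x ^ 2 * w (n + 2)
      - (2 * x + x ^ 2) * w (n + 1) + 2 * x ^ 2 * w n"
    by (simp add: algebra_simps power2_eq_square)
qed

lemma H_recurrence_unique:
  assumes "H_recurrence x a" "H_recurrence x b" "\<And>n. n < 4 \<Longrightarrow> a n = b n"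
  shows "a n = b n"
proof (induction n rule: less_induct)
  case (less n)
  show ?case
  proof (cases "n < 4")
    case True
    then show ?thesis using assms(3) by simp
  next
    case False
    then obtain m where m: "n = m + 4" by (metis add.commute le_Suc_ex not_less)
    then show ?thesis
      using assms(1,2) less[of m] less[of "m + 1"] less[of "m + 2"] less[of "m + 3"]
      unfolding H_recurrence_def by simp
  qed
qed

lemma scaled_three_term_recurrence:
  fixes s a :: "'a::comm_ring_1"
  assumes "P (Suc (Suc n)) = 2 * a * P (Suc n) - P n"
  shows "s ^ Suc (Suc n) * P (Suc (Suc n)) = 2 * a * s * (s ^ Suc n * P (Suc n)) - s ^ 2 * (s ^ n * P n)"
  unfolding assms by (simp add: algebra_simps power2_eq_square)

lemma Hval_closed_form:
  fixes x s :: "'a::field_char_0"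
  assumes s: "s ^ 2 = - 2 * x" and x: "1 - 3 * x \<noteq> 0"
  shows "Hval x n = 1 / (1 - 3 * x) + (1 / 2) * x ^ n +
           s ^ n / (2 * (1 - 3 * x)) * (8 * chebT n (- s / 4) - 3 * (x + 3) * chebU n (- s / 4))"
proof -
  define t where "t n = s ^ n * chebT n (- s / 4)" for n
  define u where "u n = s ^ n * chebU n (- s / 4)" for n
  have coeffs: "2 * (- s / 4) * s = x" "s ^ 2 = - (2 * x)" using s by (simp_all add: power2_eq_square)
  have t_rec: "t (Suc (Suc n)) = x * t (Suc n) + 2 * x * t n" for n
    using scaled_three_term_recurrence[of "\<lambda>n. chebT n (- s / 4)" n "- s / 4" s]
    unfolding t_def coeffs by simp
  have u_rec: "u (Suc (Suc n)) = x * u (Suc n) + 2 * x * u n" for n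
    using scaled_three_term_recurrence[of "\<lambda>n. chebU n (- s / 4)" n "- s / 4" s]
    unfolding u_def coeffs by simp
  have t_init: "t 0 = 1" "t (Suc 0) = x / 2" and u_init: "u 0 = 1" "u (Suc 0) = x"
    unfolding t_def u_def using s by (simp_all add: power2_eq_square)
  define k where "k = 1 - 3 * x"
  define c where "c = - 3 * (x + 3)"
  (* Twice (1 - 3x) times the claimed closed form: a combination of the four basic solutions. *)
  define S where "S n = 2 + k * x ^ n + 8 * t n + c * u n" for n
  have S_rec: "H_recurrence x (\<lambda>n. (1 / (2 * k)) * S n)"
    unfolding S_def
    using H_recurrence_const H_recurrence_power
      H_recurrence_second_order[where w = t, OF t_rec] H_recurrence_second_order[where w = u, OF u_rec]
    by (intro H_recurrence_add H_recurrence_scale)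
  have S_init: "S n = 2 * k * Hval x n" if "n < 4" for n
  proof -
    have "t 2 = x ^ 2 / 2 + 2 * x" "t 3 = x ^ 3 / 2 + 3 * x ^ 2"
      using t_rec[of 0] t_rec[of 1] t_init
      by (simp_all add: numeral_2_eq_2 numeral_3_eq_3 algebra_simps power2_eq_square power3_eq_cube)
    moreover have "u 2 = x ^ 2 + 2 * x" "u 3 = x ^ 3 + 4 * x ^ 2"
      using u_rec[of 0] u_rec[of 1] u_init
      by (simp_all add: numeral_2_eq_2 numeral_3_eq_3 algebra_simps power2_eq_square power3_eq_cube)
    moreover have "n = 0 \<or> n = 1 \<or> n = 2 \<or> n = 3" using that by auto
    ultimately show ?thesis unfolding S_def k_def c_def
      by (elim disjE) (simp_all add: Hval_initial Hval_initial(2)[unfolded One_nat_def]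
          t_init u_init algebra_simps power2_eq_square power3_eq_cube)
  qed
  have k: "k \<noteq> 0" using x k_def by simp
  then have "Hval x n = (1 / (2 * k)) * S n"
    using H_recurrence_unique[OF Hval_recurrence S_rec] S_init by simp
  also have "\<dots> = 1 / k + (1 / 2) * x ^ n + s ^ n / (2 * k) *
      (8 * chebT n (- s / 4) - 3 * (x + 3) * chebU n (- s / 4))"
    unfolding S_def t_def u_def c_def using k by (simp add: field_simps)
  finally show ?thesis unfolding k_def .
qed

lemma map_poly_of_int_H:
  "map_poly (of_int :: int \<Rightarrow> 'a::comm_ring_1) (H n) = (\<Sum>m = 1..2 ^ n. monom 1 (e m))"
proof -
  have add: "map_poly (of_int :: int \<Rightarrow> 'a) (p + q) = map_poly of_int p + map_poly of_int q"
    for p q by (rule poly_eqI) (simp add: coeff_map_poly)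
  have "map_poly (of_int :: int \<Rightarrow> 'a) (sum f A) = (\<Sum>m\<in>A. map_poly of_int (f m))"
    for f :: "nat \<Rightarrow> int poly" and A
    by (induction A rule: infinite_finite_induct) (simp_all add: add)
  then show ?thesis unfolding H_def by (simp add: map_poly_monom)
qed

lemma H_in_fractions: "to_fract (map_poly (of_int :: int \<Rightarrow> rat) (H n)) = Hval xQ n"
proof -
  have to_fract_power: "to_fract (p ^ k) = to_fract p ^ k" for p :: "rat poly" and k
    by (induction k) simp_all
  show ?thesis
    unfolding map_poly_of_int_H Hval_def xQ_def by (simp add: monom_altdef to_fract_power)
qed

lemma H_evaluated: "poly (map_poly (of_int :: int \<Rightarrow> complex) (H n)) x = Hval x n"
  unfolding map_poly_of_int_H Hval_def by (simp add: poly_sum poly_monom)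

theorem mainTheorem6:
  shows "Abs_fps (\<lambda>n. to_fract (map_poly (of_int :: int \<Rightarrow> rat) (H n))) =
           (1 - fps_const xQ * fps_X * (1 + fps_X - fps_X ^ 2)) /
           ((1 - fps_X) * (1 - fps_const xQ * fps_X) *
            (1 - fps_const xQ * fps_X - 2 * fps_const xQ * fps_X ^ 2))
         \<and> (\<forall>(n::nat) (x::complex). x \<noteq> 1 / 3 \<longrightarrow>
           poly (map_poly (of_int :: int \<Rightarrow> complex) (H n)) x =
             1 / (1 - 3 * x) + (1 / 2) * x ^ n +
             (csqrt (2 * x) * \<i>) ^ n / (2 * (1 - 3 * x)) *
               (8 * chebT n (- csqrt (2 * x) * \<i> / 4)
                - 3 * (x + 3) * chebU n (- csqrt (2 * x) * \<i> / 4)))"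
proof (intro conjI allI impI)
  show "Abs_fps (\<lambda>n. to_fract (map_poly (of_int :: int \<Rightarrow> rat) (H n))) =
           (1 - fps_const xQ * fps_X * (1 + fps_X - fps_X ^ 2)) /
           ((1 - fps_X) * (1 - fps_const xQ * fps_X) *
            (1 - fps_const xQ * fps_X - 2 * fps_const xQ * fps_X ^ 2))"
    unfolding H_in_fractions by (rule H_recurrence_fps[OF Hval_recurrence Hval_initial])
next
  fix n :: nat and x :: complex
  assume "x \<noteq> 1 / 3"
  then have "1 - 3 * x \<noteq> 0" by (auto simp: field_simps)
  moreover have "(csqrt (2 * x) * \<i>) ^ 2 = - 2 * x" by (simp add: power_mult_distrib)
  ultimately show "poly (map_poly (of_int :: int \<Rightarrow> complex) (H n)) x =
             1 / (1 - 3 * x) + (1 / 2) * x ^ n +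
             (csqrt (2 * x) * \<i>) ^ n / (2 * (1 - 3 * x)) *
               (8 * chebT n (- csqrt (2 * x) * \<i> / 4)
                - 3 * (x + 3) * chebU n (- csqrt (2 * x) * \<i> / 4))"
    unfolding H_evaluated by (simp add: Hval_closed_form)
qed

end
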